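(* Let $S\le T_n$ be a transformation monoid and $G$ the normalizer of $S$ in $S_n$. If $a\in S$ is $\mathcal H$-related in $SG$ to an idempotent $e$ of $SG$, then $e\in S$ and $a$ is $\mathcal H$-related in $S$ to $e$.
   Context: A transformation monoid is a subsemigroup of $T_n$ containing the identity map; $G=\{g\in S_n:g^{-1}Sg=S\}$ and $SG=\{sg:s\in S,g\in G\}$, a semigroup. In a semigroup $U$ (with $U^1$ denoting $U$ with an identity adjoined), $a\,\mathcal R\,b$ if $a=bu$, $b=av$ for some $u,v\in U^1$; $a\,\mathcal L\,b$ if $a=ub$, $b=va$ for some $u,v\in U^1$; and $a\,\mathcal H\,b$ if both $a\,\mathcal R\,b$ and $a\,\mathcal L\,b$. *)

theory Defs
  imports Main
begin

text \<open>Transformations of a finite set of n points are modelled as functions on a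
finite type 'a (so n = CARD('a)); the product of transformations is composition.\<close>

definition trans_monoid :: "('a::finite \<Rightarrow> 'a) set \<Rightarrow> bool" where
  "trans_monoid S \<longleftrightarrow> id \<in> S \<and> (\<forall>s\<in>S. \<forall>t\<in>S. s \<circ> t \<in> S)"

definition normalizer :: "('a::finite \<Rightarrow> 'a) set \<Rightarrow> ('a \<Rightarrow> 'a) set" where
  "normalizer S = {g. bij g \<and> (\<lambda>s. inv g \<circ> s \<circ> g) ` S = S}"

definition set_prod :: "('a \<Rightarrow> 'a) set \<Rightarrow> ('a \<Rightarrow> 'a) set \<Rightarrow> ('a \<Rightarrow> 'a) set" where
  "set_prod S G = {s \<circ> g | s g. s \<in> S \<and> g \<in> G}"

text \<open>Green's relations in a semigroup U of transformations, with U^1 = U plus an adjoined identity.\<close>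
definition R_rel :: "('a \<Rightarrow> 'a) set \<Rightarrow> ('a \<Rightarrow> 'a) \<Rightarrow> ('a \<Rightarrow> 'a) \<Rightarrow> bool" where
  "R_rel U a b \<longleftrightarrow> a \<in> U \<and> b \<in> U \<and>
     (a = b \<or> (\<exists>u\<in>U. a = b \<circ> u)) \<and> (b = a \<or> (\<exists>v\<in>U. b = a \<circ> v))"

definition L_rel :: "('a \<Rightarrow> 'a) set \<Rightarrow> ('a \<Rightarrow> 'a) \<Rightarrow> ('a \<Rightarrow> 'a) \<Rightarrow> bool" where
  "L_rel U a b \<longleftrightarrow> a \<in> U \<and> b \<in> U \<and>
     (a = b \<or> (\<exists>u\<in>U. a = u \<circ> b)) \<and> (b = a \<or> (\<exists>v\<in>U. b = v \<circ> a))"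

definition H_rel :: "('a \<Rightarrow> 'a) set \<Rightarrow> ('a \<Rightarrow> 'a) \<Rightarrow> ('a \<Rightarrow> 'a) \<Rightarrow> bool" where
  "H_rel U a b \<longleftrightarrow> R_rel U a b \<and> L_rel U a b"

end

theory Submission
  imports Defs
begin

text \<open>Being H-related to an idempotent e (in any semigroup of transformations) makes a an
element of a group with identity e inside the full transformation monoid. Since that monoid is
finite, the powers of a are eventually periodic, and cancelling with a one-sided inverse shows a^(d+1) = e for
some d. Thus e and the inverse a^d of a are powers of a, so they lie in every transformation
monoid containing a, and the H-relation descends to S.\<close>

lemma funpow_in_trans_monoid:
  assumes "trans_monoid S" "a \<in> S"
  shows "a ^^ n \<in> S"
  using assms by (induction n) (auto simp: trans_monoid_def)

lemma H_rel_idempotent_local_identity: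
  assumes "H_rel U a e" "e \<circ> e = e"
  shows "e \<circ> a = a" "a \<circ> e = a" "\<exists>v. a \<circ> v = e"
proof -
  from assms(1) have R: "R_rel U a e" and L: "L_rel U a e"
    unfolding H_rel_def by auto
  from R obtain u where "a = e \<circ> u"
    unfolding R_rel_def by (metis comp_id)
  then show "e \<circ> a = a" by (metis assms(2) comp_assoc)
  from L obtain u' where "a = u' \<circ> e"
    unfolding L_rel_def by (metis id_comp)
  then show "a \<circ> e = a" by (metis assms(2) comp_assoc)
  from R show "\<exists>v. a \<circ> v = e"
    unfolding R_rel_def by (metis comp_id)
qed

lemma funpow_right_inverse:
  assumes "a \<circ> e = a" "a \<circ> v = e"
  shows "a ^^ n \<circ> e \<circ> v ^^ n = e"
proof (induction n)
  case (Suc n)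
  have "a ^^ Suc n = a ^^ n \<circ> a" "v ^^ Suc n = v \<circ> v ^^ n"
    by (rule funpow_Suc_right, rule funpow.simps(2))
  then have "a ^^ Suc n \<circ> e \<circ> v ^^ Suc n = a ^^ n \<circ> (a \<circ> e) \<circ> v \<circ> v ^^ n"
    by (simp only: comp_assoc)
  also have "\<dots> = a ^^ n \<circ> e \<circ> v ^^ n"
    by (simp only: assms comp_assoc)
  also have "\<dots> = e"
    by (rule Suc.IH)
  finally show ?case .
qed simp

lemma funpow_eventually_periodic:
  fixes a :: "'a::finite \<Rightarrow> 'a"
  obtains i d where "a ^^ (Suc d + i) = a ^^ i"
proof -
  have "\<not> inj (\<lambda>n. a ^^ n)"
    using finite_imageD[of "\<lambda>n. a ^^ n" UNIV] by auto
  then obtain i j where "i < j" "a ^^ j = a ^^ i"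
    unfolding inj_def by (metis linorder_neq_iff)
  moreover from \<open>i < j\<close> have "Suc (j - Suc i) + i = j" by simp
  ultimately show ?thesis
    using that by metis
qed

lemma funpow_Suc_eq_local_identity:
  fixes a :: "'a::finite \<Rightarrow> 'a"
  assumes "a \<circ> e = a" "a \<circ> v = e"
  obtains d where "a ^^ Suc d = e"
proof -
  obtain i d where period: "a ^^ (Suc d + i) = a ^^ i"
    using funpow_eventually_periodic by blast
  have "a ^^ Suc d \<circ> e = a ^^ Suc d \<circ> (a ^^ i \<circ> e \<circ> v ^^ i)"
    by (simp only: funpow_right_inverse[OF assms])
  also have "\<dots> = a ^^ (Suc d + i) \<circ> e \<circ> v ^^ i"
    by (simp only: funpow_add comp_assoc)
  also have "\<dots> = e"
    by (simp only: period funpow_right_inverse[OF assms])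
  finally have "a ^^ Suc d \<circ> e = e" .
  moreover have "a ^^ Suc d \<circ> e = a ^^ Suc d"
    by (simp only: funpow_Suc_right comp_assoc assms(1))
  ultimately show ?thesis using that by simp
qed

theorem lemma4p4:
  fixes S :: "('a::finite \<Rightarrow> 'a) set" and a e :: "'a \<Rightarrow> 'a"
  assumes "trans_monoid S"
    and "a \<in> S"
    and "e \<in> set_prod S (normalizer S)" and "e \<circ> e = e"
    and "H_rel (set_prod S (normalizer S)) a e"
  shows "e \<in> S \<and> H_rel S a e"
proof -
  note local_identity = H_rel_idempotent_local_identity[OF assms(5,4)]
  then obtain v where "a \<circ> v = e" by blast
  then obtain d where power: "a ^^ Suc d = e"
    using funpow_Suc_eq_local_identity local_identity(2) by blast
  have "e \<in> S" "a ^^ d \<in> S"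
    using funpow_in_trans_monoid[OF assms(1,2)] power by metis+
  moreover have "a \<circ> a ^^ d = e" "a ^^ d \<circ> a = e"
    using power funpow_Suc_right[of d a] by simp_all
  ultimately show ?thesis
    using assms(2) local_identity(1,2)
    unfolding H_rel_def R_rel_def L_rel_def by metis
qed

end
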